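(* There is an absolute constant $c>0$ such that for every prime $p$ and every divisor $m$ of $p-1$ with $d=(p-1)/m\ge2$, we have $\vartheta(m,p)\ge c\,p^{1/\varphi(d)}$.
   Context: For a prime $p$ and a divisor $m$ of $p-1$, $\mathcal G_m\subseteq\mathbb F_p^*$ is the unique multiplicative subgroup of index $m$ (order $d=(p-1)/m$). For $\lambda\in\mathbb F_p^*$, $\rho(\lambda,p)=\min\{rs: r,s\text{ positive integers},\ r\equiv\lambda s\pmod p\}$, and $\vartheta(m,p)=\min_{\lambda\in\mathcal G_m,\ \lambda\ne1}\rho(\lambda,p)$. $\varphi$ is Euler's function. *)

theory Defs
  imports "HOL-Number_Theory.Number_Theory"
begin

text \<open>Elements of F_p^* are represented by their residues in {1..p-1}.
  G_m is the unique subgroup of F_p^* of index m, i.e. of order d = (p-1)/m,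
  which is the set of residues x with x^d = 1 in F_p.\<close>
definition subgrp_index :: "nat \<Rightarrow> nat \<Rightarrow> nat set" where
  "subgrp_index m p = {x \<in> {1..p-1}. [x ^ ((p - 1) div m) = 1] (mod p)}"

definition rho :: "nat \<Rightarrow> nat \<Rightarrow> nat" where
  "rho l p = (LEAST n. \<exists>r s. r > 0 \<and> s > 0 \<and> n = r * s \<and> [r = l * s] (mod p))"

definition theta :: "nat \<Rightarrow> nat \<Rightarrow> nat" where
  "theta m p = Min {rho l p | l. l \<in> subgrp_index m p \<and> l \<noteq> 1}"

end

(*
  Let l <> 1 lie in G_m and r = l s (mod p) with r, s > 0. Since p divides
  l^d - 1 = prod_{e | d} Phi_e(l) but not l - 1 = Phi_1(l), it divides Phi_e(l) for
  some divisor e >= 2 of d, where Phi_e is the e-th cyclotomic polynomial: monic, with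
  integer coefficients and of degree phi(e) <= phi(d). Then p also divides the
  homogenised value F = s^phi(e) Phi_e(r/s) = prod_zeta (r - zeta s), the product over
  the primitive e-th roots of unity. No factor vanishes and each has modulus at most
  r + s, so 0 <> |F| <= (r + s)^phi(e) <= (2 r s)^phi(d). Hence p <= (2 r s)^phi(d),
  i.e. r s >= p^(1/phi(d)) / 2, and c = 1/2 works.
*)

theory Submission
  imports Defs "HOL-Computational_Algebra.Polynomial"
begin

lemma map_poly_of_int_add:
  "map_poly (of_int :: int \<Rightarrow> 'a::comm_ring_1) (p + q) = map_poly of_int p + map_poly of_int q"
  by (intro poly_eqI) (simp add: coeff_map_poly)

lemma map_poly_of_int_mult:
  "map_poly (of_int :: int \<Rightarrow> 'a::comm_ring_1) (p * q) = map_poly of_int p * map_poly of_int q"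
  by (intro poly_eqI) (simp add: coeff_map_poly coeff_mult)

lemma map_poly_of_int_prod:
  "map_poly (of_int :: int \<Rightarrow> 'a::comm_ring_1) (\<Prod>x\<in>A. f x) = (\<Prod>x\<in>A. map_poly of_int (f x))"
  by (induction A rule: infinite_finite_induct) (simp_all add: map_poly_of_int_mult)

lemma map_poly_of_int_monom_minus_1:
  "map_poly (of_int :: int \<Rightarrow> 'a::comm_ring_1) (monom 1 n - 1) = monom 1 n - 1"
  by (intro poly_eqI) (simp add: coeff_map_poly)

lemma map_poly_of_int_inject [simp]:
  "map_poly (of_int :: int \<Rightarrow> 'a::ring_char_0) p = map_poly of_int q \<longleftrightarrow> p = q"
  by (metis coeff_map_poly of_int_0 of_int_eq_iff poly_eqI)

lemma degree_map_poly_of_int [simp]: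
  "degree (map_poly (of_int :: int \<Rightarrow> 'a::ring_char_0) p) = degree p"
  by (rule degree_map_poly) simp

lemma lead_coeff_map_poly_of_int [simp]:
  "lead_coeff (map_poly (of_int :: int \<Rightarrow> 'a::ring_char_0) p) = of_int (lead_coeff p)"
  by (simp add: coeff_map_poly)

lemma map_poly_of_int_factor_of_monic:
  fixes h :: "'a::{idom, ring_char_0} poly"
  assumes fgh: "map_poly of_int f = map_poly of_int g * h" and monic: "lead_coeff g = 1"
  obtains q where "h = map_poly of_int q"
proof -
  have "g \<noteq> 0" using monic by auto
  obtain q r where qr: "pseudo_divmod f g = (q, r)" by (cases "pseudo_divmod f g") auto
  have f: "f = g * q + r" using pseudo_divmod(1)[OF \<open>g \<noteq> 0\<close> qr] monic by simp
  have r: "r = 0 \<or> degree r < degree g" using pseudo_divmod(2)[OF \<open>g \<noteq> 0\<close> qr] .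
  have "map_poly of_int g * (h - map_poly of_int q) = (map_poly of_int r :: 'a poly)"
    using fgh unfolding f by (simp add: map_poly_of_int_add map_poly_of_int_mult algebra_simps)
  moreover have "map_poly of_int g \<noteq> (0 :: 'a poly)"
    using monic by (metis lead_coeff_map_poly_of_int leading_coeff_0_iff of_int_1 one_neq_zero)
  \<comment> \<open>otherwise the left-hand side would have degree at least \<open>degree g > degree r\<close>\<close>
  ultimately have "h - map_poly of_int q = 0"
    using r by (metis degree_map_poly_of_int degree_mult_eq leD le_add1 map_poly_0 mult_eq_0_iff)
  then show ?thesis using that by simp
qed

(* For n = 0 the condition is vacuous and the set is UNIV, hence the hypotheses n > 0 below. *)
definition prim_roots_unity :: "nat \<Rightarrow> complex set" where
  "prim_roots_unity n = {z. z ^ n = 1 \<and> (\<forall>k. 0 < k \<and> k < n \<longrightarrow> z ^ k \<noteq> 1)}"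

definition cyclotomic :: "nat \<Rightarrow> complex poly" where
  "cyclotomic n = (\<Prod>z\<in>prim_roots_unity n. [:-z, 1:])"

lemma finite_prim_roots_unity: "n > 0 \<Longrightarrow> finite (prim_roots_unity n)"
  by (rule finite_subset[of _ "{z. z ^ n = 1}"]) (auto simp: prim_roots_unity_def finite_roots_unity)

lemma norm_prim_roots_unity:
  assumes "z \<in> prim_roots_unity n" "n > 0"
  shows "norm z = 1"
proof -
  have "z ^ n = 1 ^ n" using assms(1) by (simp add: prim_roots_unity_def)
  then show ?thesis using assms(2) by (metis norm_one power_eq_imp_eq_norm)
qed

lemma prim_roots_unity_1: "prim_roots_unity 1 = {1}"
  by (auto simp: prim_roots_unity_def)

lemma disjoint_prim_roots_unity:
  assumes "e \<noteq> e'" "e > 0" "e' > 0"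
  shows "prim_roots_unity e \<inter> prim_roots_unity e' = {}"
  using assms by (cases "e < e'") (auto simp: prim_roots_unity_def neq_iff)

lemma roots_unity_eq_UN_prim_roots_unity:
  assumes "n > 0"
  shows "{z::complex. z ^ n = 1} = (\<Union>e\<in>{e. e dvd n}. prim_roots_unity e)"
proof safe
  fix z :: complex
  assume z: "z ^ n = 1"
  define e where "e = (LEAST k. 0 < k \<and> z ^ k = 1)"
  have e: "0 < e" "z ^ e = 1" using LeastI[of "\<lambda>k. 0 < k \<and> z ^ k = 1" n] assms z by (auto simp: e_def)
  have minimal: "\<not> (0 < k \<and> z ^ k = 1)" if "k < e" for k
    using that not_less_Least by (auto simp: e_def)
  have "z ^ (n mod e) = 1"
    using z e by (metis mult_div_mod_eq power_add power_mult power_one mult_1)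
  then have "n mod e = 0" using minimal[of "n mod e"] e by auto
  then show "z \<in> (\<Union>e\<in>{e. e dvd n}. prim_roots_unity e)"
    using e minimal by (auto simp: prim_roots_unity_def intro!: bexI[of _ e])
qed (auto simp: prim_roots_unity_def power_mult)

lemma sum_card_prim_roots_unity:
  assumes "n > 0"
  shows "(\<Sum>e | e dvd n. card (prim_roots_unity e)) = n"
proof -
  have "(\<Sum>e | e dvd n. card (prim_roots_unity e)) = card (\<Union>e\<in>{e. e dvd n}. prim_roots_unity e)"
    using assms disjoint_prim_roots_unity dvd_pos_nat
    by (intro card_UN_disjoint[symmetric]) (auto simp: finite_divisors_nat finite_prim_roots_unity)
  also have "\<dots> = n"
    using assms by (simp add: roots_unity_eq_UN_prim_roots_unity[symmetric] card_roots_unity_eq)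
  finally show ?thesis .
qed

lemma card_prim_roots_unity: "n > 0 \<Longrightarrow> card (prim_roots_unity n) = totient n"
proof (induction n rule: less_induct)
  case (less n)
  have divisors: "{e. e dvd n} = insert n {e. e dvd n \<and> e < n}"
    using less.prems by (auto dest: dvd_imp_le)
  have "(\<Sum>e | e dvd n \<and> e < n. card (prim_roots_unity e)) = (\<Sum>e | e dvd n \<and> e < n. totient e)"
    using less by (intro sum.cong) (auto intro: dvd_pos_nat)
  moreover have "card (prim_roots_unity n) + (\<Sum>e | e dvd n \<and> e < n. card (prim_roots_unity e))
      = totient n + (\<Sum>e | e dvd n \<and> e < n. totient e)"
    using sum_card_prim_roots_unity[OF less.prems] totient_divisor_sum[of n]
    by (simp add: divisors)
  ultimately show ?case by simp
qed

lemma prod_roots_unity_linear_factors: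
  assumes "n > 0"
  shows "(\<Prod>z\<in>{z::complex. z ^ n = 1}. [:-z, 1:]) = monom 1 n - 1"
proof -
  let ?R = "{z::complex. z ^ n = 1}"
  have card: "card ?R = n" using card_roots_unity_eq assms by blast
  then have deg: "degree (\<Prod>z\<in>?R. [:-z, 1:]) = n"
    by (subst degree_prod_sum_eq) auto
  have "lead_coeff (\<Prod>z\<in>?R. [:-z, 1:]) = 1"
    by (simp add: lead_coeff_prod)
  then have "coeff (\<Prod>z\<in>?R. [:-z, 1:]) n = coeff (monom 1 n - 1) n"
    using deg assms by simp
  moreover have "degree (monom (1::complex) n - 1) \<le> n"
    by (metis degree_diff_le degree_monom_le degree_1 le0)
  moreover have "poly (\<Prod>z\<in>?R. [:-z, 1:]) z = poly (monom 1 n - 1) z" if "z \<in> ?R" for z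
    using that assms by (auto simp: poly_prod poly_monom finite_roots_unity)
  ultimately show ?thesis
    using card deg by (intro poly_eqI_degree_lead_coeff[where n = n and A = ?R]) auto
qed

lemma prod_cyclotomic_divisors:
  assumes "n > 0"
  shows "(\<Prod>e | e dvd n. cyclotomic e) = monom 1 n - 1"
proof -
  have "(\<Prod>e | e dvd n. cyclotomic e) = (\<Prod>z\<in>(\<Union>e\<in>{e. e dvd n}. prim_roots_unity e). [:-z, 1:])"
    unfolding cyclotomic_def using assms disjoint_prim_roots_unity dvd_pos_nat
    by (intro prod.UNION_disjoint[symmetric]) (auto simp: finite_divisors_nat finite_prim_roots_unity)
  also have "\<dots> = monom 1 n - 1"
    using assms by (simp add: roots_unity_eq_UN_prim_roots_unity[symmetric] prod_roots_unity_linear_factors)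
  finally show ?thesis .
qed

lemma lead_coeff_cyclotomic [simp]: "lead_coeff (cyclotomic n) = 1"
  by (simp add: cyclotomic_def lead_coeff_prod)

lemma degree_cyclotomic: "n > 0 \<Longrightarrow> degree (cyclotomic n) = totient n"
  by (simp add: cyclotomic_def degree_prod_sum_eq card_prim_roots_unity)

lemma cyclotomic_has_int_coeffs: "n > 0 \<Longrightarrow> \<exists>c. cyclotomic n = map_poly of_int c"
proof (induction n rule: less_induct)
  case (less n)
  let ?S = "{e. e dvd n \<and> e < n}"
  have "\<forall>e\<in>?S. \<exists>c. cyclotomic e = map_poly of_int c"
    using less by (auto intro: dvd_pos_nat)
  then obtain C where C: "\<And>e. e \<in> ?S \<Longrightarrow> cyclotomic e = map_poly of_int (C e)"
    by metis
  have "lead_coeff (C e) = 1" if "e \<in> ?S" for e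
    using C[OF that] lead_coeff_cyclotomic[of e] by (simp add: coeff_map_poly)
  then have monic: "lead_coeff (\<Prod>e\<in>?S. C e) = 1"
    by (simp add: lead_coeff_prod)
  have "{e. e dvd n} = insert n ?S"
    using less.prems by (auto dest: dvd_imp_le)
  then have "monom 1 n - 1 = cyclotomic n * (\<Prod>e\<in>?S. cyclotomic e)"
    using prod_cyclotomic_divisors[OF less.prems] by simp
  also have "(\<Prod>e\<in>?S. cyclotomic e) = map_poly of_int (\<Prod>e\<in>?S. C e)"
    using C by (simp add: map_poly_of_int_prod)
  finally have "map_poly of_int (monom 1 n - 1) = map_poly of_int (\<Prod>e\<in>?S. C e) * cyclotomic n"
    by (simp add: map_poly_of_int_monom_minus_1 mult.commute)
  then obtain c where "cyclotomic n = map_poly of_int c"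
    using monic by (rule map_poly_of_int_factor_of_monic)
  then show ?case ..
qed

definition cyclotomic_int :: "nat \<Rightarrow> int poly" where
  "cyclotomic_int n = (SOME c. cyclotomic n = map_poly of_int c)"

lemma map_poly_cyclotomic_int: "n > 0 \<Longrightarrow> map_poly of_int (cyclotomic_int n) = cyclotomic n"
  unfolding cyclotomic_int_def by (metis (mono_tags) someI_ex cyclotomic_has_int_coeffs)

lemma degree_cyclotomic_int: "n > 0 \<Longrightarrow> degree (cyclotomic_int n) = totient n"
  by (metis degree_cyclotomic degree_map_poly_of_int map_poly_cyclotomic_int)

lemma cyclotomic_int_1: "cyclotomic_int 1 = [:-1, 1:]"
proof -
  have "cyclotomic 1 = [:-1, 1:]"
    unfolding cyclotomic_def prim_roots_unity_1 by simp
  then have "map_poly of_int (cyclotomic_int 1) = (map_poly of_int [:-1, 1:] :: complex poly)"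
    by (simp add: map_poly_cyclotomic_int map_poly_pCons)
  then show ?thesis by simp
qed

lemma prod_cyclotomic_int_divisors:
  assumes "n > 0"
  shows "(\<Prod>e | e dvd n. cyclotomic_int e) = monom 1 n - 1"
proof -
  have "map_poly of_int (\<Prod>e | e dvd n. cyclotomic_int e) = (\<Prod>e | e dvd n. cyclotomic e)"
    using assms by (auto simp: map_poly_of_int_prod map_poly_cyclotomic_int intro!: prod.cong dvd_pos_nat)
  also have "\<dots> = map_poly of_int (monom 1 n - 1)"
    using assms by (simp add: prod_cyclotomic_divisors map_poly_of_int_monom_minus_1)
  finally show ?thesis by simp
qed

definition homogenize :: "int poly \<Rightarrow> int \<Rightarrow> int \<Rightarrow> int" where
  "homogenize c r s = (\<Sum>i\<le>degree c. coeff c i * r ^ i * s ^ (degree c - i))"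

lemma homogenize_cong:
  assumes "[r = l * s] (mod m)"
  shows "[homogenize c r s = s ^ degree c * poly c l] (mod m)"
proof -
  have "[homogenize c r s = (\<Sum>i\<le>degree c. coeff c i * (l * s) ^ i * s ^ (degree c - i))] (mod m)"
    unfolding homogenize_def using assms by (intro cong_sum cong_mult cong_refl cong_pow)
  also have "(\<Sum>i\<le>degree c. coeff c i * (l * s) ^ i * s ^ (degree c - i)) = s ^ degree c * poly c l"
    unfolding poly_altdef sum_distrib_left
    by (intro sum.cong refl) (simp add: power_mult_distrib mult_ac flip: power_add)
  finally show ?thesis .
qed

lemma of_int_homogenize:
  assumes "s \<noteq> 0"
  shows "(of_int (homogenize c r s) :: 'a::field_char_0)
    = of_int s ^ degree c * poly (map_poly of_int c) (of_int r / of_int s)"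
  unfolding homogenize_def poly_altdef sum_distrib_left degree_map_poly_of_int of_int_sum
  using assms
  by (intro sum.cong refl) (simp add: coeff_map_poly power_divide field_simps flip: power_add)

lemma of_int_homogenize_cyclotomic_int:
  assumes "n > 0" "s \<noteq> 0"
  shows "(of_int (homogenize (cyclotomic_int n) r s) :: complex)
    = (\<Prod>z\<in>prim_roots_unity n. of_int r - z * of_int s)"
proof -
  have "(of_int (homogenize (cyclotomic_int n) r s) :: complex)
      = of_int s ^ card (prim_roots_unity n) * (\<Prod>z\<in>prim_roots_unity n. of_int r / of_int s - z)"
    using assms by (simp add: of_int_homogenize degree_cyclotomic_int map_poly_cyclotomic_int
        card_prim_roots_unity cyclotomic_def poly_prod)
  also have "\<dots> = (\<Prod>z\<in>prim_roots_unity n. of_int s * (of_int r / of_int s - z))"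
    by (simp add: prod.distrib)
  also have "\<dots> = (\<Prod>z\<in>prim_roots_unity n. of_int r - z * of_int s)"
    using assms by (intro prod.cong refl) (simp add: field_simps)
  finally show ?thesis .
qed

lemma homogenize_cyclotomic_int_nonzero:
  assumes "n \<ge> 2" "r > 0" "s > 0"
  shows "homogenize (cyclotomic_int n) r s \<noteq> 0"
proof
  assume "homogenize (cyclotomic_int n) r s = 0"
  then obtain z where z: "z \<in> prim_roots_unity n" "of_int r = z * of_int s"
    using assms of_int_homogenize_cyclotomic_int[of n s r] finite_prim_roots_unity[of n] by auto
  then have "norm z = 1" using assms(1) by (simp add: norm_prim_roots_unity)
  moreover have "z = of_int r / of_int s" using z(2) assms by (simp add: field_simps)
  ultimately have "z = 1" using assms by (simp add: norm_divide)
  moreover have "z ^ 1 \<noteq> 1" using z(1) assms(1) by (auto simp: prim_roots_unity_def)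
  ultimately show False by simp
qed

lemma abs_homogenize_cyclotomic_int_le:
  assumes "n > 0" "r \<ge> 0" "s > 0"
  shows "\<bar>homogenize (cyclotomic_int n) r s\<bar> \<le> (r + s) ^ totient n"
proof -
  have "real_of_int \<bar>homogenize (cyclotomic_int n) r s\<bar>
      = norm (complex_of_int (homogenize (cyclotomic_int n) r s))"
    by (simp only: norm_of_int of_int_abs)
  also have "\<dots> = (\<Prod>z\<in>prim_roots_unity n. norm (of_int r - z * of_int s))"
    using assms by (simp add: of_int_homogenize_cyclotomic_int prod_norm)
  also have "\<dots> \<le> (\<Prod>z\<in>prim_roots_unity n. real_of_int (r + s))"
  proof (intro prod_mono conjI norm_ge_zero)
    fix z assume "z \<in> prim_roots_unity n"
    then have "norm z = 1" using assms(1) by (rule norm_prim_roots_unity)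
    then show "norm (of_int r - z * of_int s) \<le> real_of_int (r + s)"
      using norm_triangle_ineq4[of "of_int r" "z * of_int s"] assms by (simp add: norm_mult)
  qed
  also have "\<dots> = real_of_int ((r + s) ^ totient n)"
    using assms by (simp add: card_prim_roots_unity)
  finally show ?thesis by linarith
qed

lemma prime_dvd_cyclotomic_int:
  fixes p l :: int
  assumes "prime p" "d > 0" "p dvd l ^ d - 1" "\<not> p dvd l - 1"
  obtains e where "e dvd d" "e \<noteq> 1" "p dvd poly (cyclotomic_int e) l"
proof -
  have "l ^ d - 1 = (\<Prod>e | e dvd d. poly (cyclotomic_int e) l)"
    using prod_cyclotomic_int_divisors[OF assms(2)] by (simp add: poly_monom flip: poly_prod)
  then obtain e where "e dvd d" "p dvd poly (cyclotomic_int e) l"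
    using assms(1-3) by (auto simp: prime_dvd_prod_iff)
  moreover have "e \<noteq> 1" using calculation assms(4) cyclotomic_int_1 by auto
  ultimately show ?thesis using that by blast
qed

lemma prime_le_pow_totient:
  fixes p l r s d :: nat
  assumes p: "prime p" and d: "d > 0" and l: "[l ^ d = 1] (mod p)" "\<not> [l = 1] (mod p)"
    and rs: "r > 0" "s > 0" "[r = l * s] (mod p)"
  shows "p \<le> (2 * r * s) ^ totient d"
proof -
  have "[int l ^ d = 1] (mod int p)" "\<not> [int l = 1] (mod int p)"
    using l by (metis cong_int_iff of_nat_1 of_nat_power)+
  then have "int p dvd int l ^ d - 1" "\<not> int p dvd int l - 1"
    by (simp_all add: cong_iff_dvd_diff)
  then obtain e where e: "e dvd d" "e \<noteq> 1" "int p dvd poly (cyclotomic_int e) (int l)"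
    using prime_dvd_cyclotomic_int[of "int p" d "int l"] p d by auto
  have "e > 0" using e(1) d by (auto intro: dvd_pos_nat)
  define F where "F = homogenize (cyclotomic_int e) (int r) (int s)"
  have "[F = int s ^ degree (cyclotomic_int e) * poly (cyclotomic_int e) (int l)] (mod int p)"
    unfolding F_def using rs(3) by (intro homogenize_cong) (metis cong_int_iff of_nat_mult)
  then have "int p dvd F" using e(3) by (simp add: cong_dvd_iff)
  moreover have "F \<noteq> 0"
    unfolding F_def using \<open>e > 0\<close> e(2) rs by (intro homogenize_cyclotomic_int_nonzero) auto
  ultimately have "int p \<le> \<bar>F\<bar>" using dvd_imp_le_int[of F "int p"] by simp
  also have "\<dots> \<le> (int r + int s) ^ totient e"
    unfolding F_def using \<open>e > 0\<close> rs by (intro abs_homogenize_cyclotomic_int_le) auto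
  also have "\<dots> \<le> int (2 * r * s) ^ totient e"
  proof (rule power_mono)
    have "r \<le> r * s" "s \<le> r * s" using rs by simp_all
    then show "int r + int s \<le> int (2 * r * s)" by linarith
  qed simp
  also have "\<dots> \<le> int (2 * r * s) ^ totient d"
  proof (rule power_increasing)
    show "totient e \<le> totient d" using e(1) d by (rule totient_dvd_mono)
    show "1 \<le> int (2 * r * s)" using rs(1,2) by (simp add: int_one_le_iff_zero_less)
  qed
  finally show ?thesis by (simp only: of_nat_power[symmetric] of_nat_le_iff)
qed

lemma powr_inverse_le_of_le_power:
  fixes x y :: real
  assumes "0 \<le> x" "0 < y" "n > 0" "x \<le> y ^ n"
  shows "x powr (1 / real n) \<le> y"
proof -
  have "x powr (1 / real n) \<le> (y ^ n) powr (1 / real n)"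
    using assms by (intro powr_mono2) auto
  also have "\<dots> = y"
    using assms by (simp add: powr_realpow[symmetric] powr_powr)
  finally show ?thesis .
qed

lemma subgrp_index_nontrivial:
  assumes p: "prime p" and m: "m dvd p - 1" and d: "(p - 1) div m \<ge> 2"
  obtains l where "l \<in> subgrp_index m p" "l \<noteq> 1"
proof -
  let ?d = "(p - 1) div m"
  have "?d dvd p - 1" using m by (metis dvd_div_mult_self dvd_triv_left)
  then have "card {x \<in> totatives p. ord p x = ?d} = totient ?d"
    using prime_card_elements_with_ord_eq_totient[OF prime_gt_1_nat[OF p] p] by simp
  also have "totient ?d > 0" using d by simp
  finally obtain x where x: "x \<in> totatives p" "ord p x = ?d"
    by (auto simp: card_gt_0_iff)
  have "x \<in> {1..p - 1}" using x(1) p by (auto simp: totatives_def le_less prime_gt_1_nat)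
  moreover have "[x ^ ?d = 1] (mod p)" using x(2) ord_works[of x p] by simp
  moreover have "x \<noteq> 1" using x(2) d by auto
  ultimately show ?thesis using that by (auto simp: subgrp_index_def)
qed

lemma theta_attained:
  assumes "l \<in> subgrp_index m p" "l \<noteq> 1"
  obtains l' where "l' \<in> subgrp_index m p" "l' \<noteq> 1" "theta m p = rho l' p"
proof -
  have "finite (subgrp_index m p)" by (simp add: subgrp_index_def)
  then have "theta m p \<in> {rho l p | l. l \<in> subgrp_index m p \<and> l \<noteq> 1}"
    unfolding theta_def using assms by (intro Min_in) auto
  then show ?thesis using that by blast
qed

lemma rho_attained:
  assumes "l > 0"
  obtains r s where "r > 0" "s > 0" "[r = l * s] (mod p)" "rho l p = r * s"
proof -
  let ?P = "\<lambda>n. \<exists>r s. r > 0 \<and> s > 0 \<and> n = r * s \<and> [r = l * s] (mod p)"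
  have "?P (l * 1)" using assms by (intro exI[of _ l] exI[of _ 1]) simp
  then have "?P (rho l p)" unfolding rho_def by (rule LeastI)
  then show ?thesis using that by auto
qed

theorem lemma4p1:
  shows "\<exists>c::real. c > 0 \<and>
    (\<forall>p m :: nat. prime p \<longrightarrow> m dvd (p - 1) \<longrightarrow> (p - 1) div m \<ge> 2 \<longrightarrow>
       real (theta m p) \<ge> c * real p powr (1 / real (totient ((p - 1) div m))))"
proof (intro exI[of _ "1/2"] conjI allI impI)
  fix p m :: nat
  assume p: "prime p" and m: "m dvd p - 1" and index: "(p - 1) div m \<ge> 2"
  define d where "d = (p - 1) div m"
  obtain l0 where "l0 \<in> subgrp_index m p" "l0 \<noteq> 1"
    using subgrp_index_nontrivial[OF p m index] .
  then obtain l where l: "l \<in> subgrp_index m p" "l \<noteq> 1" "theta m p = rho l p"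
    by (rule theta_attained)
  then have l_range: "0 < l" "l < p" and l_pow: "[l ^ d = 1] (mod p)"
    by (auto simp: subgrp_index_def d_def)
  have l_ne_1: "\<not> [l = 1] (mod p)"
    using l(2) l_range prime_gt_1_nat[OF p] by (simp add: cong_def)
  obtain r s where rs: "r > 0" "s > 0" "[r = l * s] (mod p)" "rho l p = r * s"
    using rho_attained[OF l_range(1)] .
  have "p \<le> (2 * r * s) ^ totient d"
    using prime_le_pow_totient[OF p _ l_pow l_ne_1 rs(1-3)] index by (simp add: d_def)
  then have "real p \<le> real ((2 * r * s) ^ totient d)"
    by (simp only: of_nat_le_iff)
  then have "real p \<le> (2 * real (r * s)) ^ totient d"
    by (simp add: mult.assoc)
  then have "real p powr (1 / real (totient d)) \<le> 2 * real (r * s)"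
    using rs(1,2) index by (intro powr_inverse_le_of_le_power) (simp_all add: d_def)
  then show "1 / 2 * real p powr (1 / real (totient ((p - 1) div m))) \<le> real (theta m p)"
    using l(3) rs(4) by (simp add: d_def)
qed simp

end
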